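(* Let $\mathfrak{M}=(V,\langle\cdot,\cdot\rangle,A)$ be a model. (1) $\mathfrak{M}$ is Einstein if and only if $\mathfrak{M}$ is a simple Jacobi--Ricci commuting model with $\operatorname{Spec}(\rho)=\{a_1\}$ for some real $a_1$. (2) Let $\mathfrak{M}$ be a simple Jacobi--Ricci commuting model which is not Einstein, so that $\operatorname{Spec}(\rho)=\{a_1\pm a_2\sqrt{-1}\}$ with $a_1\in\mathbb{R}$, $a_2>0$. Set $J:=a_2^{-1}\{\rho-a_1\operatorname{id}\}$. Then $J$ is self-adjoint with respect to $\langle\cdot,\cdot\rangle$, $J^2=-\operatorname{id}$ (i.e. $J$ is a complex structure on $V$), $A(Jx,y,z,w)=A(x,Jy,z,w)=A(x,y,Jz,w)=A(x,y,z,Jw)$ for all $x,y,z,w\in V$, and $\rho=a_1\operatorname{id}+a_2J$.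
   Context: A model is a triple $\mathfrak{M}=(V,\langle\cdot,\cdot\rangle,A)$ where $V$ is a finite-dimensional real vector space, $\langle\cdot,\cdot\rangle$ is a non-degenerate symmetric bilinear form (inner product) of some signature $(p,q)$ on $V$, and $A\in\otimes^4V^*$ is an algebraic curvature tensor, i.e. $A(v_1,v_2,v_3,v_4)=-A(v_2,v_1,v_3,v_4)=A(v_3,v_4,v_1,v_2)$ and $A(v_1,v_2,v_3,v_4)+A(v_2,v_3,v_1,v_4)+A(v_3,v_1,v_2,v_4)=0$. The Jacobi operator $\mathcal{J}(x)$, curvature operator $\mathcal{R}(x,y)$ and Ricci operator $\rho$ are defined by $\langle\mathcal{J}(x)y,z\rangle=A(y,x,x,z)$, $\langle\mathcal{R}(x,y)z,w\rangle=A(x,y,z,w)$, and $\langle\rho x,y\rangle=\operatorname{Tr}\{z\mapsto\frac12\mathcal{R}(z,x)y+\frac12\mathcal{R}(z,y)x\}$. $\mathfrak{M}$ is Einstein if $\rho=a\operatorname{id}$ for some $a\in\mathbb{R}$. $\mathfrak{M}$ is Jacobi--Ricci commuting if $\mathcal{J}(v)\rho=\rho\mathcal{J}(v)$ for all $v\in V$; it is known that this is equivalent to $A(\rho v_1,v_2,v_3,v_4)=A(v_1,\rho v_2,v_3,v_4)=A(v_1,v_2,\rho v_3,v_4)=A(v_1,v_2,v_3,\rho v_4)$ for all $v_i\in V$. $\mathfrak{M}$ is a simple Jacobi--Ricci commuting model if it is Jacobi--Ricci commuting, $\rho$ is complex diagonalizable, and either $\operatorname{Spec}(\rho)=\{a_1\}$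 or $\operatorname{Spec}(\rho)=\{a_1\pm a_2\sqrt{-1}\}$ with $a_2>0$ (spectrum taken in $\mathbb{C}$). *)

theory Defs
  imports "HOL-Analysis.Analysis"
begin

text \<open>The vector space V is modelled as real^'n ('n a finite index type).
  The inner product is a (possibly indefinite) non-degenerate symmetric bilinear form B,
  and the algebraic curvature tensor is a 4-linear form A.\<close>

definition lin4 :: "('v::real_vector \<Rightarrow> 'v \<Rightarrow> 'v \<Rightarrow> 'v \<Rightarrow> real) \<Rightarrow> bool" where
  "lin4 A \<longleftrightarrow>
     (\<forall>y z w. linear (\<lambda>x. A x y z w)) \<and> (\<forall>x z w. linear (\<lambda>y. A x y z w)) \<and>
     (\<forall>x y w. linear (\<lambda>z. A x y z w)) \<and> (\<forall>x y z. linear (\<lambda>w. A x y z w))"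

definition inner_form :: "('v::real_vector \<Rightarrow> 'v \<Rightarrow> real) \<Rightarrow> bool" where
  "inner_form B \<longleftrightarrow> (\<forall>y. linear (\<lambda>x. B x y)) \<and> (\<forall>x. linear (\<lambda>y. B x y)) \<and>
     (\<forall>x y. B x y = B y x) \<and> (\<forall>x. (\<forall>y. B x y = 0) \<longrightarrow> x = 0)"

definition alg_curv_tensor :: "('v::real_vector \<Rightarrow> 'v \<Rightarrow> 'v \<Rightarrow> 'v \<Rightarrow> real) \<Rightarrow> bool" where
  "alg_curv_tensor A \<longleftrightarrow> lin4 A \<and>
     (\<forall>v1 v2 v3 v4. A v1 v2 v3 v4 = - A v2 v1 v3 v4) \<and>
     (\<forall>v1 v2 v3 v4. A v1 v2 v3 v4 = A v3 v4 v1 v2) \<and>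
     (\<forall>v1 v2 v3 v4. A v1 v2 v3 v4 + A v2 v3 v1 v4 + A v3 v1 v2 v4 = 0)"

definition model :: "('v::real_vector \<Rightarrow> 'v \<Rightarrow> real) \<Rightarrow> ('v \<Rightarrow> 'v \<Rightarrow> 'v \<Rightarrow> 'v \<Rightarrow> real) \<Rightarrow> bool" where
  "model B A \<longleftrightarrow> inner_form B \<and> alg_curv_tensor A"

definition jacobi_op where
  "jacobi_op B A x y = (THE u. \<forall>z. B u z = A y x x z)"

definition curv_op where
  "curv_op B A x y z = (THE u. \<forall>w. B u w = A x y z w)"

definition lin_trace :: "(real^'n \<Rightarrow> real^'n) \<Rightarrow> real" where
  "lin_trace f = (\<Sum>i\<in>UNIV. f (axis i 1) $ i)"

definition ricci_op :: "(real^'n \<Rightarrow> real^'n \<Rightarrow> real) \<Rightarrow> (real^'n \<Rightarrow> real^'n \<Rightarrow> real^'n \<Rightarrow> real^'n \<Rightarrow> real)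
    \<Rightarrow> real^'n \<Rightarrow> real^'n" where
  "ricci_op B A x = (THE u. \<forall>y. B u y =
      lin_trace (\<lambda>z. (1/2) *\<^sub>R curv_op B A z x y + (1/2) *\<^sub>R curv_op B A z y x))"

definition einstein where
  "einstein B A \<longleftrightarrow> (\<exists>a::real. ricci_op B A = (\<lambda>x. a *\<^sub>R x))"

definition jacobi_ricci_commuting where
  "jacobi_ricci_commuting B A \<longleftrightarrow>
     (\<forall>v. jacobi_op B A v \<circ> ricci_op B A = ricci_op B A \<circ> jacobi_op B A v)"

definition cmatrix :: "(real^'n \<Rightarrow> real^'n) \<Rightarrow> complex^'n^'n" where
  "cmatrix f = (\<chi> i j. complex_of_real (matrix f $ i $ j))"

definition complex_diagonalizable :: "(real^'n \<Rightarrow> real^'n) \<Rightarrow> bool" where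
  "complex_diagonalizable f \<longleftrightarrow>
     (\<exists>(P::complex^'n^'n) (d::'n \<Rightarrow> complex). invertible P \<and>
        cmatrix f ** P = P ** (\<chi> i j. if i = j then d i else 0))"

definition cspec :: "(real^'n \<Rightarrow> real^'n) \<Rightarrow> complex set" where
  "cspec f = {c. \<exists>v::complex^'n. v \<noteq> 0 \<and> cmatrix f *v v = c *s v}"

definition simple_JRC where
  "simple_JRC B A \<longleftrightarrow> jacobi_ricci_commuting B A \<and> complex_diagonalizable (ricci_op B A) \<and>
     ((\<exists>a1::real. cspec (ricci_op B A) = {complex_of_real a1}) \<or>
      (\<exists>a1 a2::real. a2 > 0 \<and> cspec (ricci_op B A) = {Complex a1 a2, Complex a1 (- a2)}))"

end

theory Submission
  imports Defs
begin

text \<open>Polarising the Jacobi--Ricci commutation identity \<open>A(\<rho>y,v,v,z) = A(y,v,v,\<rho>z)\<close> shows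
  that the 4-form \<open>A(\<rho>x,y,z,w)\<close> inherits the skew and pair symmetries of \<open>A\<close>, so \<open>\<rho>\<close>
  can be moved into any slot of \<open>A\<close>. Complex diagonalisability pins \<open>\<rho>\<close> down by its
  spectrum: \<open>\<rho> = a\<^sub>1 id\<close> if the spectrum is \<open>{a\<^sub>1}\<close>, and otherwise
  \<open>\<rho>\<^sup>2 - 2a\<^sub>1\<rho> + (a\<^sub>1\<^sup>2 + a\<^sub>2\<^sup>2) = 0\<close>, so that \<open>J = (\<rho> - a\<^sub>1)/a\<^sub>2\<close> squares to \<open>-id\<close>.
  Being an affine expression in the self-adjoint \<open>\<rho>\<close>, \<open>J\<close> is self-adjoint and moves between
  the slots of \<open>A\<close> just like \<open>\<rho>\<close>.\<close>

section \<open>Representing linear functionals by a non-degenerate form\<close>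

lemma inner_form_linear_left: "inner_form B \<Longrightarrow> linear (\<lambda>x. B x y)"
  by (simp add: inner_form_def)

lemma inner_form_linear_right: "inner_form B \<Longrightarrow> linear (\<lambda>y. B x y)"
  by (simp add: inner_form_def)

lemma inner_form_commute: "inner_form B \<Longrightarrow> B x y = B y x"
  by (simp add: inner_form_def)

lemma inner_form_eqI:
  assumes B: "inner_form B" and eq: "\<And>w. B u w = B v w"
  shows "u = v"
proof -
  have "B (u - v) w = 0" for w
    using eq linear_diff[OF inner_form_linear_left[OF B]] by simp
  then have "u - v = 0"
    using B unfolding inner_form_def by blast
  then show ?thesis by simp
qed

lemma linear_basis_expansion:
  fixes g :: "real^'n \<Rightarrow> real"
  assumes "linear g"
  shows "g y = (\<Sum>i\<in>UNIV. y$i * g (axis i 1))"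
proof -
  have "g y = g (\<Sum>i\<in>UNIV. y$i *\<^sub>R axis i 1)"
    using basis_expansion[of y] by (simp add: scalar_mult_eq_scaleR)
  also have "\<dots> = (\<Sum>i\<in>UNIV. y$i * g (axis i 1))"
    by (simp add: linear_sum[OF assms] linear_scale[OF assms])
  finally show ?thesis .
qed

text \<open>The map \<open>u \<mapsto> B u\<close> into the dual space is injective by non-degeneracy, hence
  surjective by finite dimensionality.\<close>

lemma inner_form_represents:
  fixes B :: "real^'n \<Rightarrow> real^'n \<Rightarrow> real"
  assumes B: "inner_form B" and f: "linear f"
  shows "\<exists>u. \<forall>y. B u y = f y"
proof -
  define T where "T u = (\<chi> i. B u (axis i 1))" for u
  have lin_T: "linear T"
    unfolding T_def linear_iff
    using linear_add[OF inner_form_linear_left[OF B]] linear_scale[OF inner_form_linear_left[OF B]]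
    by (simp add: vec_eq_iff)
  have "inj T"
  proof (rule linear_injective_0[OF lin_T, THEN iffD2], intro allI impI)
    fix u assume "T u = 0"
    then have "B u y = 0" for y
      by (simp add: T_def vec_eq_iff
          linear_basis_expansion[OF inner_form_linear_right[OF B], of u y])
    then show "u = 0" using B by (simp add: inner_form_def)
  qed
  then obtain u where u: "T u = (\<chi> i. f (axis i 1))"
    using linear_inj_imp_surj[OF lin_T] by (metis surjE)
  have "B u y = f y" for y
    using u by (simp add: T_def vec_eq_iff linear_basis_expansion[OF f, of y]
        linear_basis_expansion[OF inner_form_linear_right[OF B], of u y])
  then show ?thesis by blast
qed

lemma inner_form_the_representative:
  fixes B :: "real^'n \<Rightarrow> real^'n \<Rightarrow> real"
  assumes B: "inner_form B" and f: "linear f"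
  shows "B (THE u. \<forall>y. B u y = f y) y = f y"
proof -
  obtain u where u: "\<forall>y. B u y = f y"
    using inner_form_represents[OF B f] by blast
  have "(THE u. \<forall>y. B u y = f y) = u"
    using u by (intro the_equality) (auto intro: inner_form_eqI[OF B])
  then show ?thesis using u by simp
qed

lemma linear_the_representative:
  fixes B :: "real^'n \<Rightarrow> real^'n \<Rightarrow> real"
  assumes B: "inner_form B" and lin_F: "\<And>p. linear (F p)" and lin_F': "\<And>w. linear (\<lambda>p. F p w)"
  shows "linear (\<lambda>p. THE u. \<forall>w. B u w = F p w)"
proof -
  note rep = inner_form_the_representative[OF B lin_F]
  note lin_B = inner_form_linear_left[OF B]
  show ?thesis
    by (rule linearI; rule inner_form_eqI[OF B])
      (simp_all only: rep linear_add[OF lin_B] linear_scale[OF lin_B],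
        simp_all add: linear_add[OF lin_F'] linear_scale[OF lin_F'])
qed

locale curvature_model =
  fixes B :: "real^'n \<Rightarrow> real^'n \<Rightarrow> real"
    and A :: "real^'n \<Rightarrow> real^'n \<Rightarrow> real^'n \<Rightarrow> real^'n \<Rightarrow> real"
  assumes model: "model B A"
begin

lemma inner_form: "inner_form B"
  using model by (simp add: model_def)

lemma alg_curv_tensor: "alg_curv_tensor A"
  using model by (simp add: model_def)

lemma lin4: "lin4 A"
  using alg_curv_tensor unfolding alg_curv_tensor_def by blast

lemma A_linear_1: "linear (\<lambda>x. A x y z w)"
  and A_linear_2: "linear (\<lambda>y. A x y z w)"
  and A_linear_3: "linear (\<lambda>z. A x y z w)"
  and A_linear_4: "linear (\<lambda>w. A x y z w)"
  using lin4 by (simp_all add: lin4_def)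

lemma A_skew_12: "A x y z w = - A y x z w"
  using alg_curv_tensor unfolding alg_curv_tensor_def by blast

lemma A_pair_sym: "A x y z w = A z w x y"
  using alg_curv_tensor unfolding alg_curv_tensor_def by blast

lemma A_bianchi: "A x y z w + A y z x w + A z x y w = 0"
  using alg_curv_tensor unfolding alg_curv_tensor_def by blast

lemma A_skew_34: "A x y z w = - A x y w z"
  using A_pair_sym[of x y z w] A_skew_12[of z w x y] A_pair_sym[of w z x y] by linarith

lemma A_bianchi_234: "A x y z w + A x z w y + A x w y z = 0"
  using A_pair_sym[of x y z w] A_pair_sym[of x z w y] A_pair_sym[of x w y z] A_bianchi[of z w y x]
    A_skew_34[of z w y x] A_skew_34[of w y z x] A_skew_34[of y z w x]
  by linarith

lemma A_reverse: "A x y z w = A w z y x"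
  using A_pair_sym[of x y z w] A_skew_12[of z w x y] A_skew_34[of w z x y] by linarith

lemma linear_curv_op_2: "linear (\<lambda>y. curv_op B A x y z)"
  unfolding curv_op_def by (rule linear_the_representative[OF inner_form A_linear_4 A_linear_2])

lemma linear_curv_op_3: "linear (\<lambda>z. curv_op B A x y z)"
  unfolding curv_op_def by (rule linear_the_representative[OF inner_form A_linear_4 A_linear_3])

definition ricci_form :: "real^'n \<Rightarrow> real^'n \<Rightarrow> real" where
  "ricci_form x y =
     lin_trace (\<lambda>z. (1/2) *\<^sub>R curv_op B A z x y + (1/2) *\<^sub>R curv_op B A z y x)"

lemma ricci_form_commute: "ricci_form x y = ricci_form y x"
  unfolding ricci_form_def by (simp add: add.commute)

lemma linear_ricci_form: "linear (ricci_form x)"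
proof -
  have expand: "ricci_form x y = (\<Sum>i\<in>UNIV. (1/2) * curv_op B A (axis i 1) x y $ i
                                    + (1/2) * curv_op B A (axis i 1) y x $ i)" for y
    by (simp add: ricci_form_def lin_trace_def)
  show ?thesis
    by (rule linearI) (simp_all add: expand linear_add[OF linear_curv_op_2]
        linear_add[OF linear_curv_op_3] linear_scale[OF linear_curv_op_2]
        linear_scale[OF linear_curv_op_3] sum.distrib sum_distrib_left algebra_simps)
qed

lemma ricci_op_inner: "B (ricci_op B A x) y = ricci_form x y"
  unfolding ricci_op_def ricci_form_def[symmetric]
  by (rule inner_form_the_representative[OF inner_form linear_ricci_form])

lemma ricci_op_self_adjoint: "B (ricci_op B A x) y = B x (ricci_op B A y)"
  using ricci_op_inner[of x y] ricci_op_inner[of y x] ricci_form_commute[of x y]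
    inner_form_commute[OF inner_form, of "ricci_op B A y" x]
  by simp

lemma linear_ricci_op: "linear (ricci_op B A)"
proof -
  note lin_left = inner_form_linear_left[OF inner_form]
    and lin_right = inner_form_linear_right[OF inner_form]
  show ?thesis
    by (rule linearI; rule inner_form_eqI[OF inner_form])
      (simp_all add: ricci_op_self_adjoint linear_add[OF lin_left] linear_add[OF lin_right]
        linear_scale[OF lin_left] linear_scale[OF lin_right])
qed

lemma jacobi_op_inner: "B (jacobi_op B A v y) z = A y v v z"
  unfolding jacobi_op_def by (rule inner_form_the_representative[OF inner_form A_linear_4])

lemma linear_jacobi_op: "linear (jacobi_op B A v)"
  unfolding jacobi_op_def by (rule linear_the_representative[OF inner_form A_linear_4 A_linear_1])

end

section \<open>Jacobi--Ricci commuting models\<close>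

text \<open>Used with \<open>W x y z w = A (ricci_op B A x) y z w\<close>, for which \<open>wC\<close> is the
  polarised Jacobi--Ricci commutation identity.\<close>

lemma skew_pair_symmetric_if_bianchi:
  fixes W :: "'a \<Rightarrow> 'a \<Rightarrow> 'a \<Rightarrow> 'a \<Rightarrow> real"
  assumes wA: "\<And>x y z w. W x y z w = - W x y w z"
    and wB: "\<And>x y z w. W x y z w + W x z w y + W x w y z = 0"
    and wC: "\<And>x y z w. W x y z w + W x z y w = W w z y x + W w y z x"
  shows "W x y z w = - W y x z w" and "W x y z w = W z w x y"
proof -
  show "W x y z w = - W y x z w"
    using wA[of x y z w] wB[of x y z w] wC[of x y z w] wC[of x y w z] wA[of x z y w]
      wA[of y x z w] wB[of y x z w] wC[of y x z w] wC[of y x w z] wA[of y z x w]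
      wB[of z x y w] wC[of z x y w] wB[of z x w y] wB[of w x y z] wB[of w x z y]
    by linarith
  show "W x y z w = W z w x y"
    using wA[of x y z w] wB[of x y z w] wC[of x y z w] wB[of x y w z] wC[of x y w z]
      wA[of x z y w] wC[of x z w y] wB[of y x z w] wC[of y x z w] wB[of y x w z] wC[of y x w z]
      wA[of z x y w] wB[of z x y w] wC[of z x y w] wB[of z x w y] wA[of z y x w]
      wB[of w x y z] wB[of w x z y]
    by linarith
qed

context curvature_model
begin

lemma jacobi_ricci_commuting_diag:
  assumes "jacobi_ricci_commuting B A"
  shows "A (ricci_op B A y) v v z = A y v v (ricci_op B A z)"
proof -
  have "jacobi_op B A v (ricci_op B A y) = ricci_op B A (jacobi_op B A v y)"
    using assms unfolding jacobi_ricci_commuting_def by (metis comp_apply)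
  then have "B (jacobi_op B A v (ricci_op B A y)) z = B (ricci_op B A (jacobi_op B A v y)) z"
    by simp
  then show ?thesis by (simp add: jacobi_op_inner ricci_op_self_adjoint)
qed

lemma jacobi_ricci_commuting_polarized:
  assumes "jacobi_ricci_commuting B A"
  shows "A (ricci_op B A y) v u z + A (ricci_op B A y) u v z
       = A y v u (ricci_op B A z) + A y u v (ricci_op B A z)"
proof -
  note diag = jacobi_ricci_commuting_diag[OF assms]
  have "A (ricci_op B A y) (v + u) (v + u) z = A y (v + u) (v + u) (ricci_op B A z)"
    by (rule diag)
  then have "A (ricci_op B A y) v v z + A (ricci_op B A y) v u z
      + A (ricci_op B A y) u v z + A (ricci_op B A y) u u z
    = A y v v (ricci_op B A z) + A y v u (ricci_op B A z)
      + A y u v (ricci_op B A z) + A y u u (ricci_op B A z)"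
    by (simp add: linear_add[OF A_linear_2] linear_add[OF A_linear_3])
  then show ?thesis
    using diag[of y v z] diag[of y u z] by linarith
qed

lemma jacobi_ricci_commuting_curvature:
  assumes jrc: "jacobi_ricci_commuting B A"
  defines "P \<equiv> ricci_op B A"
  shows "A (P x) y z w = A x (P y) z w \<and> A x (P y) z w = A x y (P z) w
       \<and> A x y (P z) w = A x y z (P w)"
proof -
  define W where "W x y z w = A (P x) y z w" for x y z w
  have wC: "W x y z w + W x z y w = W w z y x + W w y z x" for x y z w
    using jacobi_ricci_commuting_polarized[OF jrc, of x z y w]
      A_reverse[of x z y "P w"] A_reverse[of x y z "P w"]
    unfolding W_def P_def by linarith
  have skew_12: "W x y z w = - W y x z w" and pair_sym: "W x y z w = W z w x y" for x y z w
    by (rule skew_pair_symmetric_if_bianchi[of W, OF _ _ wC];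
        unfold W_def; rule A_skew_34 A_bianchi_234)+
  have move_12: "A (P x) y z w = A x (P y) z w" for x y z w
    using skew_12[of x y z w] A_skew_12[of x "P y" z w] unfolding W_def by linarith
  have move_13: "A x y (P z) w = A (P x) y z w" for x y z w
    using pair_sym[of x y z w] A_pair_sym[of x y "P z" w] unfolding W_def by linarith
  have move_14: "A x y z (P w) = A (P x) y z w"
    using move_12[of z w x y] move_13[of x y z w] A_pair_sym[of x y z "P w"] A_pair_sym[of "P z" w x y]
    by linarith
  show ?thesis using move_12 move_13 move_14 by simp
qed

lemma jacobi_ricci_commuting_if_scalar:
  assumes "ricci_op B A = (\<lambda>x. a *\<^sub>R x)"
  shows "jacobi_ricci_commuting B A"
  unfolding jacobi_ricci_commuting_def assms
  by (simp add: fun_eq_iff linear_scale[OF linear_jacobi_op])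

lemma curvature_commuting_affine:
  fixes P :: "real^'n \<Rightarrow> real^'n" and a c :: real
  assumes commute: "\<And>x y z w. A (P x) y z w = A x (P y) z w \<and> A x (P y) z w = A x y (P z) w
                                \<and> A x y (P z) w = A x y z (P w)"
  defines "J \<equiv> \<lambda>x. c *\<^sub>R (P x - a *\<^sub>R x)"
  shows "A (J x) y z w = A x (J y) z w \<and> A x (J y) z w = A x y (J z) w
       \<and> A x y (J z) w = A x y z (J w)"
proof -
  have "A (J x) y z w = c * (A (P x) y z w - a * A x y z w)"
    and "A x (J y) z w = c * (A x (P y) z w - a * A x y z w)"
    and "A x y (J z) w = c * (A x y (P z) w - a * A x y z w)"
    and "A x y z (J w) = c * (A x y z (P w) - a * A x y z w)"
    unfolding J_def
    by (simp_all add: linear_scale[OF A_linear_1] linear_diff[OF A_linear_1]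
        linear_scale[OF A_linear_2] linear_diff[OF A_linear_2]
        linear_scale[OF A_linear_3] linear_diff[OF A_linear_3]
        linear_scale[OF A_linear_4] linear_diff[OF A_linear_4])
  then show ?thesis
    using commute[of x y z w] by simp
qed

end

section \<open>Complex diagonalizable endomorphisms with prescribed spectrum\<close>

definition complexify :: "real^'n \<Rightarrow> complex^'n" where
  "complexify x = (\<chi> i. complex_of_real (x$i))"

lemma complexify_inject: "complexify u = complexify v \<longleftrightarrow> u = v"
  by (simp add: complexify_def vec_eq_iff)

lemma complexify_zero: "complexify 0 = 0"
  and complexify_diff: "complexify (u - v) = complexify u - complexify v"
  and complexify_add: "complexify (u + v) = complexify u + complexify v"
  and complexify_scaleR: "complexify (c *\<^sub>R u) = complex_of_real c *s complexify u"
  by (simp_all add: complexify_def vec_eq_iff)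

lemma cmatrix_mult_complexify:
  fixes f :: "real^'n \<Rightarrow> real^'n"
  assumes "linear f"
  shows "cmatrix f *v complexify x = complexify (f x)"
proof -
  have "(cmatrix f *v complexify x) $ i = complex_of_real ((matrix f *v x) $ i)" for i
    by (simp add: cmatrix_def complexify_def matrix_vector_mult_def)
  then show ?thesis
    using matrix_works[OF assms[unfolded linear_matrix_vector_mul_eq[symmetric]]]
    by (simp add: vec_eq_iff complexify_def)
qed

lemma mat_mult_vec: "mat (k::'a::comm_ring_1) *v v = k *s v"
  by (auto simp: vec_eq_iff matrix_vector_mult_def mat_def if_distrib [of "\<lambda>x. x * y" for y]
      cong: if_cong)

lemma matrix_mult_column: "(M ** P) $ i $ j = (M *v column j P) $ i"
  by (simp add: matrix_matrix_mult_def matrix_vector_mult_def column_def)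

lemma invertible_column_nonzero:
  fixes P :: "'a::field^'n^'n"
  assumes "invertible P"
  shows "column j P \<noteq> 0"
proof
  assume col: "column j P = 0"
  obtain P' where P': "P' ** P = mat 1"
    using assms by (auto simp: invertible_def)
  have "P *v axis j 1 = column j P"
    by (simp add: vec_eq_iff matrix_vector_mult_def column_def axis_def if_distrib cong: if_cong)
  then have "P' *v (P *v axis j 1) = 0"
    using col by simp
  then have "axis j (1::'a) = 0"
    by (simp add: matrix_vector_mul_assoc P')
  then show False by (simp add: axis_eq_0_iff)
qed

lemma eigenvector_columns_if_complex_diagonalizable:
  fixes f :: "real^'n \<Rightarrow> real^'n"
  assumes "complex_diagonalizable f"
  obtains P :: "complex^'n^'n" and d where "invertible P"
    and "\<And>j. cmatrix f *v column j P = d j *s column j P" and "\<And>j. d j \<in> cspec f"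
proof -
  obtain P :: "complex^'n^'n" and d where P: "invertible P"
    and diag: "cmatrix f ** P = P ** (\<chi> i j. if i = j then d i else 0)"
    using assms unfolding complex_diagonalizable_def by blast
  have eigen: "cmatrix f *v column j P = d j *s column j P" for j
  proof -
    have "(cmatrix f *v column j P) $ i = d j * column j P $ i" for i
    proof -
      have "(cmatrix f *v column j P) $ i = (P ** (\<chi> i j. if i = j then d i else 0)) $ i $ j"
        using matrix_mult_column[of "cmatrix f" P i j] diag by simp
      also have "\<dots> = P $ i $ j * d j"
        by (simp add: matrix_matrix_mult_def if_distrib cong: if_cong)
      finally show ?thesis by (simp add: column_def)
    qed
    then show ?thesis by (simp add: vec_eq_iff)
  qed
  moreover have "d j \<in> cspec f" for j
    unfolding cspec_def using eigen invertible_column_nonzero[OF P] by blast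
  ultimately show ?thesis
    by (rule that[OF P])
qed

text \<open>A matrix killing every complex eigenvector of a diagonalizable \<open>f\<close> kills a basis.\<close>

lemma complex_diagonalizable_annihilator:
  fixes f :: "real^'n \<Rightarrow> real^'n" and L :: "complex^'n^'n"
  assumes "complex_diagonalizable f"
    and kill: "\<And>c v. c \<in> cspec f \<Longrightarrow> cmatrix f *v v = c *s v \<Longrightarrow> L *v v = 0"
  shows "L = 0"
proof -
  obtain P :: "complex^'n^'n" and d where P: "invertible P"
    and eigen: "\<And>j. cmatrix f *v column j P = d j *s column j P" and "\<And>j. d j \<in> cspec f"
    using eigenvector_columns_if_complex_diagonalizable[OF assms(1)] by blast
  then have "L *v column j P = 0" for j
    using kill by blast
  then have LP: "L ** P = 0"
    by (simp add: vec_eq_iff matrix_mult_column)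
  obtain P' where P': "P ** P' = mat 1"
    using P by (auto simp: invertible_def)
  have "L = (L ** P) ** P'"
    by (simp add: matrix_mul_assoc[symmetric] P')
  also have "\<dots> = 0"
    unfolding LP by (simp add: matrix_matrix_mult_def vec_eq_iff)
  finally show ?thesis .
qed

lemma complex_diagonalizable_single_eigenvalue:
  fixes f :: "real^'n \<Rightarrow> real^'n"
  assumes "linear f" "complex_diagonalizable f" "cspec f = {complex_of_real a}"
  shows "f = (\<lambda>x. a *\<^sub>R x)"
proof
  fix x
  have "cmatrix f - mat (complex_of_real a) = 0"
    using assms(3)
    by (intro complex_diagonalizable_annihilator[OF assms(2)])
      (simp add: matrix_vector_mult_diff_rdistrib mat_mult_vec)
  then have "cmatrix f *v complexify x = mat (complex_of_real a) *v complexify x"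
    by simp
  then have "complexify (f x) = complexify (a *\<^sub>R x)"
    by (simp only: cmatrix_mult_complexify[OF assms(1)] mat_mult_vec complexify_scaleR)
  then show "f x = a *\<^sub>R x"
    by (simp only: complexify_inject)
qed

lemma complex_diagonalizable_conjugate_pair:
  fixes f :: "real^'n \<Rightarrow> real^'n"
  assumes lin_f: "linear f" and "complex_diagonalizable f"
    and spec: "cspec f = {Complex a1 a2, Complex a1 (- a2)}"
  shows "f (f x) = (2*a1) *\<^sub>R f x - (a1^2 + a2^2) *\<^sub>R x"
proof -
  define N where "N = cmatrix f"
  define L where "L = N ** N - mat (complex_of_real (2*a1)) ** N + mat (complex_of_real (a1^2+a2^2))"
  have L_mult: "L *v v = N *v (N *v v) - complex_of_real (2*a1) *s (N *v v)
                        + complex_of_real (a1^2+a2^2) *s v" for v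
    by (simp add: L_def matrix_vector_mult_diff_rdistrib matrix_vector_mult_add_rdistrib
        matrix_vector_mul_assoc[symmetric] mat_mult_vec)
  have "L = 0"
  proof (rule complex_diagonalizable_annihilator[OF assms(2)])
    fix c v assume "c \<in> cspec f" and eigen: "cmatrix f *v v = c *s v"
    then have root: "c^2 - complex_of_real (2*a1) * c + complex_of_real (a1^2+a2^2) = 0"
      using spec by (auto simp: complex_eq_iff power2_eq_square algebra_simps)
    have "L *v v = (c^2 - complex_of_real (2*a1) * c + complex_of_real (a1^2+a2^2)) *s v"
      by (simp add: L_mult N_def eigen vector_scalar_commute vector_smult_assoc power2_eq_square
          algebra_simps)
    then show "L *v v = 0" by (simp only: root vector_smult_lzero)
  qed
  then have "complexify (f (f x) - (2*a1) *\<^sub>R f x + (a1^2 + a2^2) *\<^sub>R x) = complexify 0"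
    using L_mult[of "complexify x"]
    by (simp add: N_def cmatrix_mult_complexify[OF lin_f] complexify_zero complexify_add
        complexify_diff complexify_scaleR)
  then show ?thesis
    by (simp add: complexify_inject algebra_simps)
qed

lemma cmatrix_scaleR: "cmatrix (\<lambda>x::real^'n. a *\<^sub>R x) = mat (complex_of_real a)"
  by (simp add: cmatrix_def matrix_def mat_def vec_eq_iff axis_def)

lemma cspec_scaleR: "cspec (\<lambda>x::real^'n. a *\<^sub>R x) = {complex_of_real a}"
proof -
  have "cspec (\<lambda>x::real^'n. a *\<^sub>R x)
      = {c. \<exists>v::complex^'n. v \<noteq> 0 \<and> complex_of_real a *s v = c *s v}"
    by (simp add: cspec_def cmatrix_scaleR mat_mult_vec)
  also have "\<dots> = {complex_of_real a}"
    using axis_eq_0_iff[of "undefined::'n" "1::complex"] by auto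
  finally show ?thesis .
qed

lemma complex_diagonalizable_scaleR: "complex_diagonalizable (\<lambda>x::real^'n. a *\<^sub>R x)"
proof -
  have "invertible (mat 1 :: complex^'n^'n)"
    unfolding invertible_def by (rule exI[of _ "mat 1"]) simp
  then show ?thesis
    unfolding complex_diagonalizable_def cmatrix_scaleR
    by (intro exI[of _ "mat 1"] exI[of _ "\<lambda>_. complex_of_real a"]) (simp add: mat_def[symmetric])
qed

section \<open>The complex structure of a non-Einstein simple Jacobi--Ricci commuting model\<close>

lemma square_eq_minus_id_if_quadratic:
  fixes P :: "'a::real_vector \<Rightarrow> 'a"
  assumes lin: "linear P" and "a2 \<noteq> 0"
    and quadratic: "\<And>x. P (P x) = (2*a1) *\<^sub>R P x - (a1^2 + a2^2) *\<^sub>R x"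
  defines "J \<equiv> \<lambda>x. inverse a2 *\<^sub>R (P x - a1 *\<^sub>R x)"
  shows "J (J x) = - x"
proof -
  have "P (P x - a1 *\<^sub>R x) - a1 *\<^sub>R (P x - a1 *\<^sub>R x)
      = P (P x) - (2*a1) *\<^sub>R P x + a1^2 *\<^sub>R x"
    by (simp add: linear_diff[OF lin] linear_scale[OF lin] scaleR_diff_right power2_eq_square
        scaleR_2 flip: scaleR_scaleR)
  also have "\<dots> = - (a2^2 *\<^sub>R x)"
    by (simp add: quadratic scaleR_left_distrib)
  finally have key: "P (P x - a1 *\<^sub>R x) - a1 *\<^sub>R (P x - a1 *\<^sub>R x) = - (a2^2 *\<^sub>R x)" .
  have "J (J x) = inverse a2 *\<^sub>R inverse a2 *\<^sub>R (P (P x - a1 *\<^sub>R x) - a1 *\<^sub>R (P x - a1 *\<^sub>R x))"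
    unfolding J_def linear_scale[OF lin] by (simp add: algebra_simps)
  also have "\<dots> = inverse a2 *\<^sub>R inverse a2 *\<^sub>R - (a2^2 *\<^sub>R x)"
    by (simp only: key)
  also have "\<dots> = - x"
    using \<open>a2 \<noteq> 0\<close> by (simp add: power2_eq_square field_simps)
  finally show ?thesis .
qed

context curvature_model
begin

lemma einstein_iff_simple_JRC_real_spectrum:
  "einstein B A \<longleftrightarrow> simple_JRC B A \<and> (\<exists>a1. cspec (ricci_op B A) = {complex_of_real a1})"
proof
  assume "einstein B A"
  then obtain a where a: "ricci_op B A = (\<lambda>x. a *\<^sub>R x)"
    unfolding einstein_def by blast
  show "simple_JRC B A \<and> (\<exists>a1. cspec (ricci_op B A) = {complex_of_real a1})"
    unfolding simple_JRC_def a
    using jacobi_ricci_commuting_if_scalar[OF a] complex_diagonalizable_scaleR cspec_scaleR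
    by blast
next
  assume "simple_JRC B A \<and> (\<exists>a1. cspec (ricci_op B A) = {complex_of_real a1})"
  then obtain a where "complex_diagonalizable (ricci_op B A)"
    and "cspec (ricci_op B A) = {complex_of_real a}"
    unfolding simple_JRC_def by blast
  then show "einstein B A"
    unfolding einstein_def
    using complex_diagonalizable_single_eigenvalue[OF linear_ricci_op] by blast
qed

lemma simple_JRC_complex_structure:
  assumes "simple_JRC B A" and "a2 > 0"
    and spec: "cspec (ricci_op B A) = {Complex a1 a2, Complex a1 (- a2)}"
  defines "J \<equiv> \<lambda>x. inverse a2 *\<^sub>R (ricci_op B A x - a1 *\<^sub>R x)"
  shows "B (J x) y = B x (J y)" and "J (J x) = - x"
    and "A (J x) y z w = A x (J y) z w \<and> A x (J y) z w = A x y (J z) w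
       \<and> A x y (J z) w = A x y z (J w)"
    and "ricci_op B A = (\<lambda>x. a1 *\<^sub>R x + a2 *\<^sub>R J x)"
proof -
  have jrc: "jacobi_ricci_commuting B A" and diag: "complex_diagonalizable (ricci_op B A)"
    using \<open>simple_JRC B A\<close> unfolding simple_JRC_def by blast+
  note lin_left = inner_form_linear_left[OF inner_form]
    and lin_right = inner_form_linear_right[OF inner_form]
  show "B (J x) y = B x (J y)"
    by (simp add: J_def linear_scale[OF lin_left] linear_diff[OF lin_left]
        linear_scale[OF lin_right] linear_diff[OF lin_right] ricci_op_self_adjoint)
  show "J (J x) = - x"
    unfolding J_def
    using \<open>a2 > 0\<close> complex_diagonalizable_conjugate_pair[OF linear_ricci_op diag spec]
    by (intro square_eq_minus_id_if_quadratic[OF linear_ricci_op]) simp_all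
  show "A (J x) y z w = A x (J y) z w \<and> A x (J y) z w = A x y (J z) w
      \<and> A x y (J z) w = A x y z (J w)"
    unfolding J_def
    by (rule curvature_commuting_affine[OF jacobi_ricci_commuting_curvature[OF jrc]])
  show "ricci_op B A = (\<lambda>x. a1 *\<^sub>R x + a2 *\<^sub>R J x)"
    using \<open>a2 > 0\<close> by (simp add: fun_eq_iff J_def)
qed

end

theorem lemma4:
  fixes B :: "real^'n \<Rightarrow> real^'n \<Rightarrow> real"
    and A :: "real^'n \<Rightarrow> real^'n \<Rightarrow> real^'n \<Rightarrow> real^'n \<Rightarrow> real"
  assumes "model B A"
  shows "(einstein B A \<longleftrightarrow>
           (simple_JRC B A \<and> (\<exists>a1::real. cspec (ricci_op B A) = {complex_of_real a1})))
    \<and> (\<forall>a1 a2 :: real. simple_JRC B A \<longrightarrow> \<not> einstein B A \<longrightarrow> a2 > 0 \<longrightarrow>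
           cspec (ricci_op B A) = {Complex a1 a2, Complex a1 (- a2)} \<longrightarrow>
           (let J = (\<lambda>x. inverse a2 *\<^sub>R (ricci_op B A x - a1 *\<^sub>R x)) in
              (\<forall>x y. B (J x) y = B x (J y)) \<and>
              (\<forall>x. J (J x) = - x) \<and>
              (\<forall>x y z w. A (J x) y z w = A x (J y) z w \<and> A x (J y) z w = A x y (J z) w
                         \<and> A x y (J z) w = A x y z (J w)) \<and>
              ricci_op B A = (\<lambda>x. a1 *\<^sub>R x + a2 *\<^sub>R J x)))"
proof -
  interpret curvature_model B A
    using assms by unfold_locales
  show ?thesis
    unfolding Let_def
    using einstein_iff_simple_JRC_real_spectrum simple_JRC_complex_structure by blast
qed

end
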